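(* Let $\Theta$, $P$, $Q$, $K$, $\mathcal{D}$, $\mathcal{S}\sim\mathcal{D}^N$, $\ell$, $L$ be as in the context, with $P,Q$ fixed independently of $\mathcal{S}$ and $\ell$ taking values in $[0,L]$. Let $d$ be a metric on $\Theta^K$, let $\rho>0$, and define the cost $c(\boldsymbol{\theta},\boldsymbol{\theta}')=d(\boldsymbol{\theta},\boldsymbol{\theta}')$ if $d(\boldsymbol{\theta},\boldsymbol{\theta}')\le\rho$ and $c(\boldsymbol{\theta},\boldsymbol{\theta}')=+\infty$ otherwise. Let $\mathcal{B}_\rho(\boldsymbol{\theta})=\{\boldsymbol{\theta}'\in\Theta^K: d(\boldsymbol{\theta},\boldsymbol{\theta}')\le\rho\}$. Then for every $\delta\in(0,1)$, with probability at least $1-\delta$ over the choice of $\mathcal{S}\sim\mathcal{D}^N$, $$\mathcal{L}_{\mathcal{D}}(Q^K)\le\mathbb{E}_{\boldsymbol{\theta}\sim Q^K}\Big[\max_{\boldsymbol{\theta}'\in\mathcal{B}_\rho(\boldsymbol{\theta})}\mathcal{L}_{\mathcal{S}}(\boldsymbol{\theta}')\Big]+L\sqrt{\frac{K\,D_{KL}(Q\|P)+\log\frac1\delta}{2N}}.$$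
   Context: $\Theta$ is a model space, $P,Q$ probability distributions on $\Theta$, $K\ge1$ an integer, and $Q^K=Q\otimes\cdots\otimes Q$ ($K$ factors) the product distribution on $\Theta^K$, whose elements are written $\boldsymbol{\theta}=(\theta_1,\dots,\theta_K)$. $\mathcal{D}$ is a distribution over data/label pairs and $\mathcal{S}=\{(x_j,y_j)\}_{j=1}^N$ an i.i.d. sample. Given a per-model loss $l(\theta;x,y)$, a divergence loss $l_{div}(\theta_{1:K};x,y)$ and $\alpha>0$, $\ell(\boldsymbol{\theta};x,y)=\frac1K\sum_{i=1}^K l(\theta_i;x,y)+\alpha\,l_{div}(\theta_{1:K};x,y)$. $\mathcal{L}_{\mathcal{D}}(\boldsymbol{\theta})=\mathbb{E}_{(x,y)\sim\mathcal{D}}[\ell(\boldsymbol{\theta};x,y)]$, $\mathcal{L}_{\mathcal{S}}(\boldsymbol{\theta})=\frac1N\sum_{j=1}^N\ell(\boldsymbol{\theta};x_j,y_j)$, $\mathcal{L}_{\mathcal{D}}(Q^K)=\mathbb{E}_{\boldsymbol{\theta}\sim Q^K}[\mathcal{L}_{\mathcal{D}}(\boldsymbol{\theta})]$. $D_{KL}$ is the Kullback–Leibler divergence. *)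

theory Defs
  imports "HOL-Probability.Probability"
begin

text \<open>Ensembles \<open>\<theta> = (\<theta>_1,...,\<theta>_K)\<close> are represented as functions \<open>nat \<Rightarrow> 'a\<close>
  (indices \<open>0..<K\<close>); \<open>\<Theta>^K\<close> is the space of the product measure \<open>PiM {..<K}\<close>.\<close>

definition ens_loss ::
  "nat \<Rightarrow> real \<Rightarrow> ('a \<Rightarrow> 'x \<Rightarrow> 'y \<Rightarrow> real) \<Rightarrow> ((nat \<Rightarrow> 'a) \<Rightarrow> 'x \<Rightarrow> 'y \<Rightarrow> real)
     \<Rightarrow> (nat \<Rightarrow> 'a) \<Rightarrow> 'x \<Rightarrow> 'y \<Rightarrow> real" where
  "ens_loss K \<alpha> l ldiv \<theta> x y = (\<Sum>i<K. l (\<theta> i) x y) / real K + \<alpha> * ldiv \<theta> x y"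

definition pop_risk :: "('x \<times> 'y) measure \<Rightarrow> ((nat \<Rightarrow> 'a) \<Rightarrow> 'x \<Rightarrow> 'y \<Rightarrow> real) \<Rightarrow> (nat \<Rightarrow> 'a) \<Rightarrow> real" where
  "pop_risk D lf \<theta> = (\<integral>z. lf \<theta> (fst z) (snd z) \<partial>D)"

definition emp_risk :: "nat \<Rightarrow> (nat \<Rightarrow> 'x \<times> 'y) \<Rightarrow> ((nat \<Rightarrow> 'a) \<Rightarrow> 'x \<Rightarrow> 'y \<Rightarrow> real) \<Rightarrow> (nat \<Rightarrow> 'a) \<Rightarrow> real" where
  "emp_risk N S lf \<theta> = (\<Sum>j<N. lf \<theta> (fst (S j)) (snd (S j))) / real N"

definition dball :: "'b set \<Rightarrow> ('b \<Rightarrow> 'b \<Rightarrow> real) \<Rightarrow> real \<Rightarrow> 'b \<Rightarrow> 'b set" where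
  "dball X d \<rho> \<theta> = {\<theta>' \<in> X. d \<theta> \<theta>' \<le> \<rho>}"

definition is_metric_on :: "'b set \<Rightarrow> ('b \<Rightarrow> 'b \<Rightarrow> real) \<Rightarrow> bool" where
  "is_metric_on X d \<longleftrightarrow>
     (\<forall>x\<in>X. \<forall>y\<in>X. 0 \<le> d x y \<and> (d x y = 0 \<longleftrightarrow> x = y) \<and> d x y = d y x) \<and>
     (\<forall>x\<in>X. \<forall>y\<in>X. \<forall>z\<in>X. d x z \<le> d x y + d y z)"

end

(*
  For a fixed ensemble \<theta>, Hoeffding's lemma bounds the exponential moment of the gap between
  population and empirical risk: E_S exp (t (L_D(\<theta>) - L_S(\<theta>))) \<le> exp (t^2 L^2 / 8N).
  By Fubini the same bound holds for E_S E_{\<theta> ~ P^K} exp (t (L_D - L_S)), so by Markov, with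
  probability at least 1 - \<delta>, the inner expectation is at most exp (t^2 L^2 / 8N) / \<delta>.
  On that event the Donsker-Varadhan change of measure from P^K to Q^K gives
  t (E_{Q^K} L_D - E_{Q^K} L_S) \<le> KL(Q^K || P^K) + ln (1/\<delta>) + t^2 L^2 / 8N, where the density of
  Q^K is the product of the densities of Q, so KL(Q^K || P^K) = K KL(Q || P).  Optimising t yields
  the square-root term, and L_S(\<theta>) is bounded by its maximum over B_\<rho>(\<theta>) because \<theta> lies in
  its own ball.
*)

theory Submission
  imports Defs
begin

lemma (in finite_measure) integrable_bounded_real:
  fixes f :: "'a \<Rightarrow> real"
  assumes f: "f \<in> borel_measurable M" and f_bounded: "\<And>x. x \<in> space M \<Longrightarrow> a \<le> f x \<and> f x \<le> b"
  shows "integrable M f"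
proof (rule integrable_const_bound[OF _ f])
  have "\<bar>f x\<bar> \<le> \<bar>a\<bar> + \<bar>b\<bar>" if "x \<in> space M" for x
    using f_bounded[OF that] by arith
  then show "AE x in M. norm (f x) \<le> \<bar>a\<bar> + \<bar>b\<bar>"
    by auto
qed

lemma (in prob_space) integral_bounded_real:
  fixes f :: "'a \<Rightarrow> real"
  assumes f: "f \<in> borel_measurable M" and f_bounded: "\<And>x. x \<in> space M \<Longrightarrow> a \<le> f x \<and> f x \<le> b"
  shows "a \<le> (\<integral>x. f x \<partial>M) \<and> (\<integral>x. f x \<partial>M) \<le> b"
  using integrable_bounded_real[OF assms] f_bounded by (auto intro!: integral_ge_const integral_le_const)

lemma ennreal_add_le: "ennreal (a + b) \<le> ennreal a + ennreal b"
  by (auto simp: ennreal_plus_if intro!: ennreal_leI)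

lemma donsker_varadhan_le:
  fixes M :: "'a measure" and r g :: "'a \<Rightarrow> real" and B c :: real
  assumes M: "prob_space M"
    and r[measurable]: "r \<in> borel_measurable M" and r_nonneg: "\<And>x. 0 \<le> r x"
    and Q: "prob_space (density M r)"
    and g[measurable]: "g \<in> borel_measurable M"
    and g_bounded: "\<And>x. x \<in> space M \<Longrightarrow> \<bar>g x\<bar> \<le> B"
    and ln_r: "integrable (density M r) (\<lambda>x. ln (r x))"
    and exp_g_le: "(\<integral>x. exp (g x) \<partial>M) \<le> c"
  shows "(\<integral>x. g x \<partial>density M r) \<le> (\<integral>x. ln (r x) \<partial>density M r) + ln c"
proof -
  interpret M: prob_space M by fact
  interpret Q: prob_space "density M r" by fact
  let ?Q = "density M r"
  define Z where "Z = (\<integral>x. exp (g x) \<partial>M)"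
  \<comment> \<open>on \<open>{r > 0}\<close>, \<open>h\<close> is the density of \<open>exp g \<cdot> M\<close> with respect to \<open>Q\<close>\<close>
  define h where "h x = exp (g x) / r x" for x
  have h_meas[measurable]: "h \<in> borel_measurable M"
    unfolding h_def by measurable
  have exp_g_bounded: "exp (- B) \<le> exp (g x) \<and> exp (g x) \<le> exp B" if "x \<in> space M" for x
    using g_bounded[OF that] by (simp add: abs_le_iff)
  have exp_g: "integrable M (\<lambda>x. exp (g x))"
    using exp_g_bounded by (intro M.integrable_bounded_real) auto
  have "exp (- B) \<le> Z"
    unfolding Z_def using M.integral_bounded_real[OF _ exp_g_bounded] by simp
  then have Z_pos: "0 < Z"
    using exp_gt_zero[of "- B"] by linarith
  have rh: "r x *\<^sub>R h x = (if r x = 0 then 0 else exp (g x))" for x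
    by (auto simp: h_def)
  have rh_int: "integrable M (\<lambda>x. r x *\<^sub>R h x)"
    unfolding rh using exp_g_bounded by (intro M.integrable_bounded_real[where a=0 and b="exp B"]) auto
  then have h_int: "integrable ?Q h"
    by (subst integrable_density) (auto simp: r_nonneg)
  have "(\<integral>x. h x \<partial>?Q) = (\<integral>x. r x *\<^sub>R h x \<partial>M)"
    by (rule integral_density) (auto simp: r_nonneg)
  also have "\<dots> \<le> Z"
    unfolding Z_def by (intro integral_mono rh_int exp_g) (auto simp: h_def)
  finally have h_le: "(\<integral>x. h x \<partial>?Q) \<le> Z" .
  have "- B \<le> g x \<and> g x \<le> B" if "x \<in> space M" for x
    using g_bounded[OF that] by arith
  then have g_int: "integrable ?Q g"
    by (intro Q.integrable_bounded_real) auto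
  have "AE x in ?Q. 0 < r x"
    by (subst AE_density) auto
  \<comment> \<open>\<open>ln t \<le> t - 1\<close> at \<open>t = h x / Z\<close>\<close>
  then have pointwise: "AE x in ?Q. g x - ln (r x) \<le> ln Z + h x / Z - 1"
  proof (rule eventually_mono)
    fix x assume "0 < r x"
    then have "ln (h x / Z) = g x - ln (r x) - ln Z"
      using Z_pos by (simp add: h_def ln_div ln_mult)
    moreover have "ln (h x / Z) \<le> h x / Z - 1"
      using \<open>0 < r x\<close> Z_pos by (intro ln_le_minus_one) (simp add: h_def)
    ultimately show "g x - ln (r x) \<le> ln Z + h x / Z - 1" by simp
  qed
  have "(\<integral>x. g x - ln (r x) \<partial>?Q) \<le> (\<integral>x. ln Z + h x / Z - 1 \<partial>?Q)"
    by (rule integral_mono_AE) (use pointwise g_int ln_r h_int in auto)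
  also have "\<dots> = ln Z + (\<integral>x. h x \<partial>?Q) / Z - 1"
    using h_int Q.prob_space by simp
  also have "\<dots> \<le> ln Z"
    using h_le Z_pos by (simp add: field_simps)
  also have "\<dots> \<le> ln c"
    using exp_g_le Z_pos by (simp add: Z_def)
  finally show ?thesis
    using g_int ln_r by simp
qed

lemma donsker_varadhan_nn_integral_le:
  fixes M :: "'a measure" and r g :: "'a \<Rightarrow> real" and B c :: real
  assumes M: "prob_space M"
    and r: "r \<in> borel_measurable M" "\<And>x. 0 \<le> r x"
    and Q: "prob_space (density M r)"
    and g[measurable]: "g \<in> borel_measurable M"
    and g_bounded: "\<And>x. x \<in> space M \<Longrightarrow> \<bar>g x\<bar> \<le> B"
    and ln_r: "integrable (density M r) (\<lambda>x. ln (r x))"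
    and exp_g: "(\<integral>\<^sup>+x. exp (g x) \<partial>M) \<le> ennreal c" and c: "0 < c"
  shows "(\<integral>x. g x \<partial>density M r) \<le> (\<integral>x. ln (r x) \<partial>density M r) + ln c"
proof -
  interpret M: prob_space M by fact
  have exp_g_int: "integrable M (\<lambda>x. exp (g x))"
    using g_bounded by (intro M.integrable_bounded_real[where a=0 and b="exp B"]) (auto simp: abs_le_iff)
  then have "ennreal (\<integral>x. exp (g x) \<partial>M) = (\<integral>\<^sup>+x. exp (g x) \<partial>M)"
    by (intro nn_integral_eq_integral[symmetric]) auto
  with exp_g c have "(\<integral>x. exp (g x) \<partial>M) \<le> c"
    by (simp add: ennreal_le_iff[symmetric] del: ennreal_le_iff)
  from donsker_varadhan_le[OF M r Q g g_bounded ln_r this] show ?thesis .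
qed

lemma integral_ln_density_nonneg:
  fixes M :: "'a measure" and r :: "'a \<Rightarrow> real"
  assumes M: "prob_space M"
    and r: "r \<in> borel_measurable M" "\<And>x. 0 \<le> r x"
    and Q: "prob_space (density M r)"
    and ln_r: "integrable (density M r) (\<lambda>x. ln (r x))"
  shows "0 \<le> (\<integral>x. ln (r x) \<partial>density M r)"
  using donsker_varadhan_le[OF M r Q _ _ ln_r, of "\<lambda>_. 0" 0 1] Q
  by (simp add: prob_space.prob_space M)

lemma indicator_PiE_prod:
  assumes I: "finite I" and \<theta>: "\<theta> \<in> extensional I"
  shows "(indicator (Pi\<^sub>E I A) \<theta> :: 'b::comm_semiring_1) = (\<Prod>i\<in>I. indicator (A i) (\<theta> i))"
proof (cases "\<theta> \<in> Pi\<^sub>E I A")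
  case False
  with \<theta> obtain j where "j \<in> I" "\<theta> j \<notin> A j"
    by (auto simp: PiE_iff)
  then have "(\<Prod>i\<in>I. indicator (A i) (\<theta> i) :: 'b) = 0"
    by (intro prod_zero[OF I] bexI[of _ j]) auto
  with False show ?thesis
    by simp
qed (simp add: PiE_iff)

lemma PiM_density_eq_density_prod:
  fixes P :: "'a measure" and f :: "'a \<Rightarrow> real" and I :: "'i set"
  assumes P: "prob_space P" and f[measurable]: "f \<in> borel_measurable P" and fnn: "\<And>x. 0 \<le> f x"
    and Q: "prob_space (density P f)" and I: "finite I"
  shows "PiM I (\<lambda>_. density P f) = density (PiM I (\<lambda>_. P)) (\<lambda>\<theta>. \<Prod>i\<in>I. f (\<theta> i))"
proof -
  interpret PP: product_prob_space "\<lambda>_. P" I by (intro product_prob_spaceI P)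
  interpret QQ: product_prob_space "\<lambda>_. density P f" I by (intro product_prob_spaceI Q)
  have [measurable]: "(\<lambda>\<theta>. \<Prod>i\<in>I. f (\<theta> i)) \<in> borel_measurable (PiM I (\<lambda>_. P))"
    by measurable
  show ?thesis
  proof (rule QQ.PiM_eqI[symmetric, OF I])
    show "sets (density (PiM I (\<lambda>_. P)) (\<lambda>\<theta>. \<Prod>i\<in>I. f (\<theta> i))) = sets (PiM I (\<lambda>_. density P f))"
      unfolding sets_density by (rule sets_PiM_cong) (simp_all only: sets_density)
  next
    fix A assume A: "\<And>i. i \<in> I \<Longrightarrow> A i \<in> sets (density P f)"
    then have A'[measurable]: "\<And>i. i \<in> I \<Longrightarrow> A i \<in> sets P" by simp
    have PiE_sets: "Pi\<^sub>E I A \<in> sets (PiM I (\<lambda>_. P))"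
      using A' by (intro sets_PiM_I_finite I) auto
    have "emeasure (density (PiM I (\<lambda>_. P)) (\<lambda>\<theta>. \<Prod>i\<in>I. f (\<theta> i))) (Pi\<^sub>E I A)
        = (\<integral>\<^sup>+\<theta>. ennreal (\<Prod>i\<in>I. f (\<theta> i)) * indicator (Pi\<^sub>E I A) \<theta> \<partial>PiM I (\<lambda>_. P))"
      by (rule emeasure_density) (auto simp: PiE_sets)
    also have "\<dots> = (\<integral>\<^sup>+\<theta>. (\<Prod>i\<in>I. ennreal (f (\<theta> i)) * indicator (A i) (\<theta> i)) \<partial>PiM I (\<lambda>_. P))"
      by (intro nn_integral_cong)
        (auto simp: space_PiM PiE_iff indicator_PiE_prod[OF I] prod.distrib prod_ennreal fnn)
    also have "\<dots> = (\<Prod>i\<in>I. \<integral>\<^sup>+x. ennreal (f x) * indicator (A i) x \<partial>P)"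
      by (rule PP.product_nn_integral_prod[OF I, where f="\<lambda>i x. ennreal (f x) * indicator (A i) x"]) simp
    also have "\<dots> = (\<Prod>i\<in>I. emeasure (density P f) (A i))"
      by (intro prod.cong refl emeasure_density[symmetric]) auto
    finally show "emeasure (density (PiM I (\<lambda>_. P)) (\<lambda>\<theta>. \<Prod>i\<in>I. f (\<theta> i))) (Pi\<^sub>E I A) = (\<Prod>i\<in>I. emeasure (density P f) (A i))" .
  qed
qed

lemma has_bochner_integral_sum_PiM_component:
  fixes Q :: "'a measure" and g :: "'a \<Rightarrow> real" and I :: "'i set"
  assumes Q: "prob_space Q" and g: "integrable Q g" and I: "finite I"
  shows "has_bochner_integral (PiM I (\<lambda>_. Q)) (\<lambda>\<theta>. \<Sum>i\<in>I. g (\<theta> i)) (real (card I) * (\<integral>x. g x \<partial>Q))"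
proof -
  have "has_bochner_integral (PiM I (\<lambda>_. Q)) (\<lambda>\<theta>. g (\<theta> i)) (\<integral>x. g x \<partial>Q)" if i: "i \<in> I" for i
  proof -
    have Q_eq: "distr (PiM I (\<lambda>_. Q)) Q (\<lambda>\<theta>. \<theta> i) = Q"
      by (rule distr_PiM_component[where M="\<lambda>_. Q"]) (use i Q in auto)
    have [measurable]: "g \<in> borel_measurable Q"
      using g by simp
    have "integrable (distr (PiM I (\<lambda>_. Q)) Q (\<lambda>\<theta>. \<theta> i)) g"
      using g Q_eq by simp
    then have "integrable (PiM I (\<lambda>_. Q)) (\<lambda>\<theta>. g (\<theta> i))"
      by (subst (asm) integrable_distr_eq) (use i in auto)
    moreover have "(\<integral>\<theta>. g (\<theta> i) \<partial>PiM I (\<lambda>_. Q)) = (\<integral>x. g x \<partial>distr (PiM I (\<lambda>_. Q)) Q (\<lambda>\<theta>. \<theta> i))"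
      by (rule integral_distr[symmetric]) (use i in auto)
    ultimately show ?thesis
      by (simp add: has_bochner_integral_iff Q_eq)
  qed
  then have "has_bochner_integral (PiM I (\<lambda>_. Q)) (\<lambda>\<theta>. \<Sum>i\<in>I. g (\<theta> i)) (\<Sum>i\<in>I. \<integral>x. g x \<partial>Q)"
    by (rule has_bochner_integral_sum)
  then show ?thesis
    by simp
qed

lemma has_bochner_integral_ln_prod_PiM:
  fixes Q :: "'a measure" and q :: "'a \<Rightarrow> real" and I :: "'i set"
  assumes Q: "prob_space Q" and q[measurable]: "q \<in> borel_measurable Q"
    and q_pos: "AE x in Q. 0 < q x" and ln_q: "integrable Q (\<lambda>x. ln (q x))" and I: "finite I"
  shows "has_bochner_integral (PiM I (\<lambda>_. Q)) (\<lambda>\<theta>. ln (\<Prod>i\<in>I. q (\<theta> i))) (real (card I) * (\<integral>x. ln (q x) \<partial>Q))"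
proof -
  have "AE \<theta> in PiM I (\<lambda>_. Q). \<forall>i\<in>I. 0 < q (\<theta> i)"
    by (intro eventually_ball_finite I ballI AE_PiM_component[where M="\<lambda>_. Q"] Q q_pos)
  then have ae: "AE \<theta> in PiM I (\<lambda>_. Q). ln (\<Prod>i\<in>I. q (\<theta> i)) = (\<Sum>i\<in>I. ln (q (\<theta> i)))"
    by (rule eventually_mono) (intro ln_prod I, auto)
  have "has_bochner_integral (PiM I (\<lambda>_. Q)) (\<lambda>\<theta>. ln (\<Prod>i\<in>I. q (\<theta> i))) (real (card I) * (\<integral>x. ln (q x) \<partial>Q))
      \<longleftrightarrow> has_bochner_integral (PiM I (\<lambda>_. Q)) (\<lambda>\<theta>. \<Sum>i\<in>I. ln (q (\<theta> i))) (real (card I) * (\<integral>x. ln (q x) \<partial>Q))"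
    using ae by (intro has_bochner_integral_cong_AE) simp_all
  with has_bochner_integral_sum_PiM_component[OF Q ln_q I] show ?thesis
    by blast
qed

lemma PiM_density_RN_deriv:
  fixes P Q :: "'a measure" and I :: "'i set"
  assumes P: "prob_space P" and Q: "prob_space Q" and sets_eq: "sets Q = sets P"
    and ac: "absolutely_continuous P Q" and KL: "integrable Q (entropy_density (exp 1) P Q)"
    and I: "finite I"
  defines "r \<equiv> \<lambda>\<theta>. \<Prod>i\<in>I. enn2real (RN_deriv P Q (\<theta> i))"
  shows "PiM I (\<lambda>_. Q) = density (PiM I (\<lambda>_. P)) r"
    and "has_bochner_integral (PiM I (\<lambda>_. Q)) (\<lambda>\<theta>. ln (r \<theta>)) (real (card I) * KL_divergence (exp 1) P Q)"
proof -
  interpret P: prob_space P by fact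
  interpret Q: prob_space Q by fact
  define q where "q x = enn2real (RN_deriv P Q x)" for x
  have q_meas[measurable]: "q \<in> borel_measurable P"
    unfolding q_def by measurable
  have "AE x in P. RN_deriv P Q x = ennreal (q x)"
    using P.RN_deriv_finite[OF Q.sigma_finite_measure_axioms ac sets_eq]
    by (rule eventually_mono) (simp add: q_def less_top)
  then have "density P (RN_deriv P Q) = density P q"
    by (intro density_cong) auto
  then have Q_eq: "Q = density P q"
    using P.density_RN_deriv[OF ac sets_eq] by simp
  have r_q: "r = (\<lambda>\<theta>. \<Prod>i\<in>I. q (\<theta> i))"
    by (simp add: r_def q_def)
  have "prob_space (density P q)"
    using Q Q_eq by simp
  then show "PiM I (\<lambda>_. Q) = density (PiM I (\<lambda>_. P)) r"
    unfolding r_q by (subst (1) Q_eq) (intro PiM_density_eq_density_prod[OF P q_meas _ _ I], simp_all add: q_def)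
  have ln_q: "entropy_density (exp 1) P Q = (\<lambda>x. ln (q x))"
    by (simp add: fun_eq_iff entropy_density_def q_def log_def)
  have "q \<in> borel_measurable Q"
    using q_meas by (simp add: measurable_cong_sets[OF sets_eq])
  moreover have "AE x in Q. 0 < q x"
    by (subst Q_eq, subst AE_density) auto
  ultimately show "has_bochner_integral (PiM I (\<lambda>_. Q)) (\<lambda>\<theta>. ln (r \<theta>)) (real (card I) * KL_divergence (exp 1) P Q)"
    unfolding r_q KL_divergence_def ln_q by (rule has_bochner_integral_ln_prod_PiM[OF Q _ _ KL[unfolded ln_q] I])
qed

lemma measurable_empirical_mean:
  fixes f :: "'t \<Rightarrow> 'z \<Rightarrow> real"
  assumes f: "(\<lambda>(\<theta>, z). f \<theta> z) \<in> borel_measurable (M \<Otimes>\<^sub>M D)"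
  shows "(\<lambda>p. (\<Sum>j<N. f (snd p) (fst p j)) / real N) \<in> borel_measurable (PiM {..<N} (\<lambda>_. D) \<Otimes>\<^sub>M M)"
proof -
  have [measurable]: "(\<lambda>p. f (snd p) (fst p j)) \<in> borel_measurable (PiM {..<N} (\<lambda>_. D) \<Otimes>\<^sub>M M)"
    if "j < N" for j
  proof -
    have "(\<lambda>p. (snd p, fst p j)) \<in> PiM {..<N} (\<lambda>_. D) \<Otimes>\<^sub>M M \<rightarrow>\<^sub>M M \<Otimes>\<^sub>M D"
      by measurable (simp add: that)
    from measurable_compose[OF this f] show ?thesis
      by simp
  qed
  show ?thesis
    by measurable
qed

lemma empirical_mean_bounded:
  fixes g :: "'z \<Rightarrow> real"
  assumes S: "S \<in> space (PiM {..<N} (\<lambda>_. D))" and N: "N \<ge> 1"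
    and g_bounded: "\<And>z. z \<in> space D \<Longrightarrow> a \<le> g z \<and> g z \<le> b"
  shows "a \<le> (\<Sum>j<N. g (S j)) / real N \<and> (\<Sum>j<N. g (S j)) / real N \<le> b"
proof -
  have "S j \<in> space D" if "j < N" for j
    using S that by (auto simp: space_PiM)
  then have "(\<Sum>j<N. a) \<le> (\<Sum>j<N. g (S j)) \<and> (\<Sum>j<N. g (S j)) \<le> (\<Sum>j<N. b)"
    using g_bounded by (intro conjI sum_mono) auto
  then show ?thesis
    using N by (simp add: field_simps)
qed

lemma nn_integral_exp_empirical_deviation_le:
  fixes D :: "'z measure" and F :: "'z \<Rightarrow> real"
  assumes D: "prob_space D" and N: "N \<ge> 1" and t: "0 < t"
    and F[measurable]: "F \<in> borel_measurable D"
    and F_bounded: "\<And>z. z \<in> space D \<Longrightarrow> a \<le> F z \<and> F z \<le> b"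
  shows "(\<integral>\<^sup>+S. exp (t * ((\<integral>z. F z \<partial>D) - (\<Sum>j<N. F (S j)) / real N)) \<partial>PiM {..<N} (\<lambda>_. D))
           \<le> exp (t\<^sup>2 * (b - a)\<^sup>2 / (8 * real N))"
proof -
  interpret D: prob_space D by fact
  interpret DN: product_prob_space "\<lambda>_. D" "{..<N}" by (intro product_prob_spaceI D)
  \<comment> \<open>Hoeffding's lemma for \<open>- F\<close>, whose centring \<open>\<mu> - F\<close> is the deviation in question\<close>
  interpret X: interval_bounded_random_variable D "\<lambda>z. - F z" "- b" "- a"
    by unfold_locales (auto dest: F_bounded)
  define \<mu> where "\<mu> = (\<integral>z. F z \<partial>D)"
  define s where "s = t / real N"
  have s: "0 < s" using t N by (simp add: s_def)
  have "(\<Sum>j<N. s * (- F (S j) - - \<mu>)) = s * (real N * \<mu> - (\<Sum>j<N. F (S j)))" for S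
    by (simp add: sum_subtractf sum_distrib_left algebra_simps)
  then have "t * (\<mu> - (\<Sum>j<N. F (S j)) / real N) = (\<Sum>j<N. s * (- F (S j) - - \<mu>))" for S
    using N by (simp add: s_def field_simps)
  then have "(\<integral>\<^sup>+S. exp (t * (\<mu> - (\<Sum>j<N. F (S j)) / real N)) \<partial>PiM {..<N} (\<lambda>_. D))
      = (\<integral>\<^sup>+S. (\<Prod>j<N. ennreal (exp (s * (- F (S j) - - \<mu>)))) \<partial>PiM {..<N} (\<lambda>_. D))"
    by (simp add: exp_sum prod_ennreal)
  also have "\<dots> = (\<Prod>j<N. \<integral>\<^sup>+z. exp (s * (- F z - - \<mu>)) \<partial>D)"
    by (rule DN.product_nn_integral_prod[where f="\<lambda>_ z. ennreal (exp (s * (- F z - - \<mu>)))"]) auto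
  also have "\<dots> \<le> (\<Prod>j<N. ennreal (exp (s\<^sup>2 * (- a - - b)\<^sup>2 / 8)))"
    using X.Hoeffdings_lemma_nn_integral[OF s] by (intro prod_mono_ennreal) (simp add: \<mu>_def)
  also have "\<dots> = exp (real N * (s\<^sup>2 * (b - a)\<^sup>2 / 8))"
    by (simp add: ennreal_power exp_of_nat_mult[symmetric] mult.assoc)
  also have "real N * (s\<^sup>2 * (b - a)\<^sup>2 / 8) = t\<^sup>2 * (b - a)\<^sup>2 / (8 * real N)"
    using N by (simp add: s_def power2_eq_square field_simps)
  finally show ?thesis by (simp add: \<mu>_def)
qed

lemma pac_bayes_exp_moment_le:
  fixes Pr :: "'t measure" and D :: "'z measure" and f :: "'t \<Rightarrow> 'z \<Rightarrow> real"
  assumes Pr: "prob_space Pr" and D: "prob_space D" and N: "N \<ge> 1" and t: "0 < t"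
    and f_meas: "(\<lambda>(\<theta>, z). f \<theta> z) \<in> borel_measurable (Pr \<Otimes>\<^sub>M D)"
    and f_bounded: "\<And>\<theta> z. \<theta> \<in> space Pr \<Longrightarrow> z \<in> space D \<Longrightarrow> a \<le> f \<theta> z \<and> f \<theta> z \<le> b"
  shows "(\<integral>\<^sup>+S. (\<integral>\<^sup>+\<theta>. exp (t * ((\<integral>z. f \<theta> z \<partial>D) - (\<Sum>j<N. f \<theta> (S j)) / real N)) \<partial>Pr)
            \<partial>PiM {..<N} (\<lambda>_. D))
         \<le> exp (t\<^sup>2 * (b - a)\<^sup>2 / (8 * real N))"
proof -
  interpret Pr: prob_space Pr by fact
  interpret D: prob_space D by fact
  interpret DN: prob_space "PiM {..<N} (\<lambda>_. D)" by (intro prob_space_PiM D)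
  interpret DN_Pr: pair_sigma_finite "PiM {..<N} (\<lambda>_. D)" Pr ..
  note [measurable] = measurable_empirical_mean[OF f_meas, of N]
  have [measurable]: "(\<lambda>\<theta>. \<integral>z. f \<theta> z \<partial>D) \<in> borel_measurable Pr"
    using f_meas by measurable
  have "(\<integral>\<^sup>+S. (\<integral>\<^sup>+\<theta>. exp (t * ((\<integral>z. f \<theta> z \<partial>D) - (\<Sum>j<N. f \<theta> (S j)) / real N)) \<partial>Pr)
            \<partial>PiM {..<N} (\<lambda>_. D))
      = (\<integral>\<^sup>+\<theta>. (\<integral>\<^sup>+S. exp (t * ((\<integral>z. f \<theta> z \<partial>D) - (\<Sum>j<N. f \<theta> (S j)) / real N))
            \<partial>PiM {..<N} (\<lambda>_. D)) \<partial>Pr)"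
    by (intro DN_Pr.Fubini'[symmetric]) measurable
  also have "\<dots> \<le> (\<integral>\<^sup>+\<theta>. exp (t\<^sup>2 * (b - a)\<^sup>2 / (8 * real N)) \<partial>Pr)"
  proof (intro nn_integral_mono)
    fix \<theta> assume \<theta>: "\<theta> \<in> space Pr"
    have "f \<theta> \<in> borel_measurable D"
      using measurable_Pair2[OF f_meas \<theta>] by simp
    from nn_integral_exp_empirical_deviation_le[OF D N t this f_bounded[OF \<theta>]]
    show "(\<integral>\<^sup>+S. exp (t * ((\<integral>z. f \<theta> z \<partial>D) - (\<Sum>j<N. f \<theta> (S j)) / real N)) \<partial>PiM {..<N} (\<lambda>_. D))
        \<le> exp (t\<^sup>2 * (b - a)\<^sup>2 / (8 * real N))" .
  qed
  finally show ?thesis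
    by (simp add: Pr.emeasure_space_1)
qed

lemma (in prob_space) Markov_inequality_prob_ge:
  assumes Z[measurable]: "Z \<in> borel_measurable M"
    and Z_int: "(\<integral>\<^sup>+x. Z x \<partial>M) \<le> ennreal B" and B: "0 < B" and \<delta>: "0 < \<delta>"
  shows "1 - \<delta> \<le> prob {x \<in> space M. Z x \<le> ennreal (B / \<delta>)}"
proof -
  let ?E = "{x \<in> space M. Z x \<le> ennreal (B / \<delta>)}"
  define c where "c = ennreal (\<delta> / B)"
  have c_B: "c * ennreal (B / \<delta>) = 1" and c_B': "c * ennreal B = ennreal \<delta>"
    using B \<delta> by (simp_all add: c_def flip: ennreal_mult)
  have "1 \<le> c * Z x" if "ennreal (B / \<delta>) < Z x" for x
  proof -
    have "c * ennreal (B / \<delta>) \<le> c * Z x"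
      using that by (intro mult_left_mono) auto
    then show ?thesis using c_B by simp
  qed
  then have "space M - ?E \<subseteq> {x \<in> space M. 1 \<le> c * Z x}"
    by (auto simp: not_le)
  then have "emeasure M (space M - ?E) \<le> c * (\<integral>\<^sup>+x. Z x * indicator (space M) x \<partial>M)"
    by (intro order.trans[OF emeasure_mono nn_integral_Markov_inequality]) auto
  also have "(\<integral>\<^sup>+x. Z x * indicator (space M) x \<partial>M) = (\<integral>\<^sup>+x. Z x \<partial>M)"
    by (intro nn_integral_cong) simp
  also have "c * \<dots> \<le> ennreal \<delta>"
    unfolding c_B'[symmetric] using Z_int by (rule mult_left_mono) simp
  finally have "prob (space M - ?E) \<le> \<delta>"
    using \<delta> by (simp add: emeasure_eq_measure)
  then show ?thesis
    by (simp add: prob_compl)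
qed

lemma catoni_bound_at_optimal_lambda:
  fixes C L n x :: real
  assumes C: "0 < C" and L: "0 < L" and n: "0 < n"
    and bound: "sqrt (8 * n * C) / L * x \<le> C + (sqrt (8 * n * C) / L)\<^sup>2 * L\<^sup>2 / (8 * n)"
  shows "x \<le> L * sqrt (C / (2 * n))"
proof -
  define s where "s = sqrt (8 * n * C)"
  have s: "0 < s" and s2: "s\<^sup>2 = 8 * n * C"
    using C n by (simp_all add: s_def)
  have "s / L * x \<le> 2 * C"
    using bound s2 L n by (simp add: s_def[symmetric] power_divide)
  then have "x \<le> 2 * C * L / s"
    using s L by (simp add: field_simps)
  also have "2 * C * L / s = L * sqrt (C / (2 * n))"
  proof -
    have "sqrt (C / (2 * n)) = s / (4 * n)"
      using s s2 n by (intro real_sqrt_unique) (auto simp: field_simps power2_eq_square)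
    moreover have "2 * C * L / s = L * (s / (4 * n))"
      using s s2 n by (simp add: field_simps power2_eq_square)
    ultimately show ?thesis
      by simp
  qed
  finally show ?thesis .
qed

lemma pac_bayes_catoni:
  fixes Pr :: "'t measure" and D :: "'z measure" and r :: "'t \<Rightarrow> real" and f :: "'t \<Rightarrow> 'z \<Rightarrow> real"
  assumes Pr: "prob_space Pr" and D: "prob_space D" and N: "N \<ge> 1" and t: "0 < t" and \<delta>: "0 < \<delta>"
    and r: "r \<in> borel_measurable Pr" "\<And>\<theta>. 0 \<le> r \<theta>"
    and Q: "prob_space (density Pr r)" and ln_r: "integrable (density Pr r) (\<lambda>\<theta>. ln (r \<theta>))"
    and f_meas: "(\<lambda>(\<theta>, z). f \<theta> z) \<in> borel_measurable (Pr \<Otimes>\<^sub>M D)"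
    and f_bounded: "\<And>\<theta> z. \<theta> \<in> space Pr \<Longrightarrow> z \<in> space D \<Longrightarrow> a \<le> f \<theta> z \<and> f \<theta> z \<le> b"
  shows "\<exists>E \<in> sets (PiM {..<N} (\<lambda>_. D)). 1 - \<delta> \<le> measure (PiM {..<N} (\<lambda>_. D)) E \<and>
           (\<forall>S\<in>E. t * ((\<integral>\<theta>. (\<integral>z. f \<theta> z \<partial>D) \<partial>density Pr r)
                         - (\<integral>\<theta>. (\<Sum>j<N. f \<theta> (S j)) / real N \<partial>density Pr r))
                  \<le> (\<integral>\<theta>. ln (r \<theta>) \<partial>density Pr r) + ln (1 / \<delta>) + t\<^sup>2 * (b - a)\<^sup>2 / (8 * real N))"
proof -
  interpret Pr: prob_space Pr by fact
  interpret D: prob_space D by fact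
  interpret Q: prob_space "density Pr r" by fact
  let ?DN = "PiM {..<N} (\<lambda>_. D)" and ?Q = "density Pr r"
  interpret DN: prob_space ?DN by (intro prob_space_PiM D)
  define R where "R \<theta> = (\<integral>z. f \<theta> z \<partial>D)" for \<theta>
  define Rs where "Rs S \<theta> = (\<Sum>j<N. f \<theta> (S j)) / real N" for S \<theta>
  define B where "B = exp (t\<^sup>2 * (b - a)\<^sup>2 / (8 * real N))"
  have R_meas[measurable]: "R \<in> borel_measurable Pr"
    unfolding R_def using f_meas by measurable
  have Rs_meas[measurable]: "(\<lambda>p. Rs (fst p) (snd p)) \<in> borel_measurable (?DN \<Otimes>\<^sub>M Pr)"
    using measurable_empirical_mean[OF f_meas, of N] by (simp add: Rs_def)
  have R_bounded: "a \<le> R \<theta> \<and> R \<theta> \<le> b" if "\<theta> \<in> space Pr" for \<theta>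
    unfolding R_def using measurable_Pair2[OF f_meas that] f_bounded[OF that]
    by (intro D.integral_bounded_real) auto
  have Rs_bounded: "a \<le> Rs S \<theta> \<and> Rs S \<theta> \<le> b" if "S \<in> space ?DN" "\<theta> \<in> space Pr" for S \<theta>
    unfolding Rs_def using that f_bounded by (intro empirical_mean_bounded[OF _ N]) auto
  define E where "E = {S \<in> space ?DN. (\<integral>\<^sup>+\<theta>. exp (t * (R \<theta> - Rs S \<theta>)) \<partial>Pr) \<le> ennreal (B / \<delta>)}"
  have "E \<in> sets ?DN"
    unfolding E_def by measurable
  moreover have "1 - \<delta> \<le> measure ?DN E"
    unfolding E_def
  proof (rule DN.Markov_inequality_prob_ge)
    show "(\<integral>\<^sup>+S. (\<integral>\<^sup>+\<theta>. exp (t * (R \<theta> - Rs S \<theta>)) \<partial>Pr) \<partial>?DN) \<le> ennreal B"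
      using pac_bayes_exp_moment_le[OF Pr D N t f_meas f_bounded] by (simp add: R_def Rs_def B_def)
  qed (use \<delta> in \<open>simp_all add: B_def\<close>)
  moreover have "t * ((\<integral>\<theta>. R \<theta> \<partial>?Q) - (\<integral>\<theta>. Rs S \<theta> \<partial>?Q))
      \<le> (\<integral>\<theta>. ln (r \<theta>) \<partial>?Q) + ln (1 / \<delta>) + t\<^sup>2 * (b - a)\<^sup>2 / (8 * real N)" if "S \<in> E" for S
  proof -
    have S: "S \<in> space ?DN"
      using that by (simp add: E_def)
    have Rs_S_meas: "Rs S \<in> borel_measurable Pr"
      using measurable_Pair2[OF Rs_meas S] by simp
    have "integrable ?Q R" "integrable ?Q (Rs S)"
      using R_bounded Rs_bounded[OF S] Rs_S_meas by (auto intro!: Q.integrable_bounded_real[where a=a and b=b])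
    then have "t * ((\<integral>\<theta>. R \<theta> \<partial>?Q) - (\<integral>\<theta>. Rs S \<theta> \<partial>?Q)) = (\<integral>\<theta>. t * (R \<theta> - Rs S \<theta>) \<partial>?Q)"
      by simp
    also have "\<dots> \<le> (\<integral>\<theta>. ln (r \<theta>) \<partial>?Q) + ln (B / \<delta>)"
    proof (rule donsker_varadhan_nn_integral_le[OF Pr r Q _ _ ln_r])
      show "\<bar>t * (R \<theta> - Rs S \<theta>)\<bar> \<le> t * (b - a)" if "\<theta> \<in> space Pr" for \<theta>
        using R_bounded[OF that] Rs_bounded[OF S that] t by (simp add: abs_mult abs_le_iff)
    qed (use that \<delta> Rs_S_meas in \<open>simp_all add: E_def B_def\<close>)
    also have "ln (B / \<delta>) = ln (1 / \<delta>) + t\<^sup>2 * (b - a)\<^sup>2 / (8 * real N)"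
      using \<delta> by (simp add: B_def ln_div)
    finally show ?thesis by simp
  qed
  ultimately show ?thesis
    unfolding R_def Rs_def by blast
qed

lemma pac_bayes_mcallester:
  fixes Pr :: "'t measure" and D :: "'z measure" and r :: "'t \<Rightarrow> real" and f :: "'t \<Rightarrow> 'z \<Rightarrow> real"
  assumes Pr: "prob_space Pr" and D: "prob_space D" and N: "N \<ge> 1" and \<delta>: "0 < \<delta>" "\<delta> < 1"
    and r: "r \<in> borel_measurable Pr" "\<And>\<theta>. 0 \<le> r \<theta>"
    and Q: "prob_space (density Pr r)" and ln_r: "integrable (density Pr r) (\<lambda>\<theta>. ln (r \<theta>))"
    and f_meas: "(\<lambda>(\<theta>, z). f \<theta> z) \<in> borel_measurable (Pr \<Otimes>\<^sub>M D)"
    and f_bounded: "\<And>\<theta> z. \<theta> \<in> space Pr \<Longrightarrow> z \<in> space D \<Longrightarrow> 0 \<le> f \<theta> z \<and> f \<theta> z \<le> L"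
  shows "\<exists>E \<in> sets (PiM {..<N} (\<lambda>_. D)). 1 - \<delta> \<le> measure (PiM {..<N} (\<lambda>_. D)) E \<and>
           (\<forall>S\<in>E. (\<integral>\<theta>. (\<integral>z. f \<theta> z \<partial>D) \<partial>density Pr r)
                  \<le> (\<integral>\<theta>. (\<Sum>j<N. f \<theta> (S j)) / real N \<partial>density Pr r)
                     + L * sqrt (((\<integral>\<theta>. ln (r \<theta>) \<partial>density Pr r) + ln (1 / \<delta>)) / (2 * real N)))"
proof -
  interpret Pr: prob_space Pr by fact
  interpret D: prob_space D by fact
  interpret DN: prob_space "PiM {..<N} (\<lambda>_. D)" by (intro prob_space_PiM D)
  let ?Q = "density Pr r"
  obtain \<theta>0 z0 where "\<theta>0 \<in> space Pr" "z0 \<in> space D"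
    using Pr.not_empty D.not_empty by blast
  then consider "L = 0" | "0 < L"
    using f_bounded by fastforce
  then show ?thesis
  proof cases
    case 1
    then have f_zero: "f \<theta> z = 0" if "\<theta> \<in> space Pr" "z \<in> space D" for \<theta> z
      using f_bounded[OF that] by simp
    have "(\<integral>z. f \<theta> z \<partial>D) = 0" if "\<theta> \<in> space Pr" for \<theta>
      using f_zero[OF that] by (simp cong: Bochner_Integration.integral_cong)
    then have risk: "(\<integral>\<theta>. (\<integral>z. f \<theta> z \<partial>D) \<partial>?Q) = (\<integral>\<theta>. 0 \<partial>?Q)"
      by (intro Bochner_Integration.integral_cong) auto
    have emp_risk: "(\<integral>\<theta>. (\<Sum>j<N. f \<theta> (S j)) / real N \<partial>?Q) = (\<integral>\<theta>. 0 \<partial>?Q)"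
      if "S \<in> space (PiM {..<N} (\<lambda>_. D))" for S
      using that f_zero by (intro Bochner_Integration.integral_cong) (auto simp: space_PiM PiE_iff)
    show ?thesis
    proof (intro bexI[of _ "space (PiM {..<N} (\<lambda>_. D))"] conjI ballI)
      fix S assume "S \<in> space (PiM {..<N} (\<lambda>_. D))"
      then show "(\<integral>\<theta>. (\<integral>z. f \<theta> z \<partial>D) \<partial>?Q)
          \<le> (\<integral>\<theta>. (\<Sum>j<N. f \<theta> (S j)) / real N \<partial>?Q)
             + L * sqrt (((\<integral>\<theta>. ln (r \<theta>) \<partial>?Q) + ln (1 / \<delta>)) / (2 * real N))"
        unfolding risk emp_risk[OF \<open>S \<in> _\<close>] 1 by simp
    qed (use DN.prob_space \<delta> in auto)
  next
    case 2
    define C where "C = (\<integral>\<theta>. ln (r \<theta>) \<partial>?Q) + ln (1 / \<delta>)"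
    have "0 < ln (1 / \<delta>)"
      using \<delta> by (intro ln_gt_zero) simp
    then have C: "0 < C"
      using integral_ln_density_nonneg[OF Pr r Q ln_r] by (simp add: C_def)
    \<comment> \<open>the minimiser of \<open>(C + t\<^sup>2 L\<^sup>2 / 8N) / t\<close>\<close>
    define t where "t = sqrt (8 * real N * C) / L"
    have t: "0 < t"
      using C N 2 by (simp add: t_def)
    obtain E where "E \<in> sets (PiM {..<N} (\<lambda>_. D))" "1 - \<delta> \<le> measure (PiM {..<N} (\<lambda>_. D)) E"
      and catoni: "\<And>S. S \<in> E \<Longrightarrow> t * ((\<integral>\<theta>. (\<integral>z. f \<theta> z \<partial>D) \<partial>?Q)
                         - (\<integral>\<theta>. (\<Sum>j<N. f \<theta> (S j)) / real N \<partial>?Q))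
                  \<le> C + t\<^sup>2 * L\<^sup>2 / (8 * real N)"
      using pac_bayes_catoni[OF Pr D N t \<delta>(1) r Q ln_r f_meas f_bounded] by (auto simp: C_def add.assoc)
    moreover have "(\<integral>\<theta>. (\<integral>z. f \<theta> z \<partial>D) \<partial>?Q)
                  \<le> (\<integral>\<theta>. (\<Sum>j<N. f \<theta> (S j)) / real N \<partial>?Q) + L * sqrt (C / (2 * real N))" if "S \<in> E" for S
      using catoni_bound_at_optimal_lambda[OF C 2 _ catoni[OF that, unfolded t_def]] N by simp
    ultimately show ?thesis
      unfolding C_def by blast
  qed
qed

lemma pac_bayes_PiM:
  fixes P Q :: "'a measure" and D :: "'z measure" and f :: "('i \<Rightarrow> 'a) \<Rightarrow> 'z \<Rightarrow> real" and I :: "'i set"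
  assumes P: "prob_space P" and Q: "prob_space Q" and sets_PQ: "sets Q = sets P"
    and ac: "absolutely_continuous P Q" and KL: "integrable Q (entropy_density (exp 1) P Q)"
    and I: "finite I" and D: "prob_space D" and N: "N \<ge> 1" and \<delta>: "0 < \<delta>" "\<delta> < 1"
    and f_meas: "(\<lambda>(\<theta>, z). f \<theta> z) \<in> borel_measurable (PiM I (\<lambda>_. Q) \<Otimes>\<^sub>M D)"
    and f_bounded: "\<And>\<theta> z. \<theta> \<in> space (PiM I (\<lambda>_. Q)) \<Longrightarrow> z \<in> space D \<Longrightarrow> 0 \<le> f \<theta> z \<and> f \<theta> z \<le> L"
  shows "\<exists>E \<in> sets (PiM {..<N} (\<lambda>_. D)). 1 - \<delta> \<le> measure (PiM {..<N} (\<lambda>_. D)) E \<and>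
           (\<forall>S\<in>E. (\<integral>\<theta>. (\<integral>z. f \<theta> z \<partial>D) \<partial>PiM I (\<lambda>_. Q))
                  \<le> (\<integral>\<theta>. (\<Sum>j<N. f \<theta> (S j)) / real N \<partial>PiM I (\<lambda>_. Q))
                     + L * sqrt ((real (card I) * KL_divergence (exp 1) P Q + ln (1 / \<delta>)) / (2 * real N)))"
proof -
  let ?r = "\<lambda>\<theta>. \<Prod>i\<in>I. enn2real (RN_deriv P Q (\<theta> i))"
  note QI_eq = PiM_density_RN_deriv(1)[OF P Q sets_PQ ac KL I]
  have ln_r: "has_bochner_integral (density (PiM I (\<lambda>_. P)) ?r) (\<lambda>\<theta>. ln (?r \<theta>))
      (real (card I) * KL_divergence (exp 1) P Q)"
    using PiM_density_RN_deriv(2)[OF P Q sets_PQ ac KL I] unfolding QI_eq .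
  have sets_PI: "sets (PiM I (\<lambda>_. P)) = sets (PiM I (\<lambda>_. Q))"
    by (intro sets_PiM_cong) (simp_all add: sets_PQ)
  have "prob_space (density (PiM I (\<lambda>_. P)) ?r)"
    unfolding QI_eq[symmetric] by (intro prob_space_PiM Q)
  moreover have "(\<lambda>(\<theta>, z). f \<theta> z) \<in> borel_measurable (PiM I (\<lambda>_. P) \<Otimes>\<^sub>M D)"
    using f_meas by (subst measurable_cong_sets[OF sets_pair_measure_cong[OF sets_PI refl] refl])
  moreover have "0 \<le> f \<theta> z \<and> f \<theta> z \<le> L" if "\<theta> \<in> space (PiM I (\<lambda>_. P))" "z \<in> space D" for \<theta> z
    using f_bounded that sets_eq_imp_space_eq[OF sets_PI] by simp
  ultimately have "\<exists>E \<in> sets (PiM {..<N} (\<lambda>_. D)). 1 - \<delta> \<le> measure (PiM {..<N} (\<lambda>_. D)) E \<and>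
           (\<forall>S\<in>E. (\<integral>\<theta>. (\<integral>z. f \<theta> z \<partial>D) \<partial>density (PiM I (\<lambda>_. P)) ?r)
                  \<le> (\<integral>\<theta>. (\<Sum>j<N. f \<theta> (S j)) / real N \<partial>density (PiM I (\<lambda>_. P)) ?r)
                     + L * sqrt (((\<integral>\<theta>. ln (?r \<theta>) \<partial>density (PiM I (\<lambda>_. P)) ?r) + ln (1 / \<delta>)) / (2 * real N)))"
    using integrable.intros[OF ln_r]
    by (intro pac_bayes_mcallester[OF prob_space_PiM[OF P] D N \<delta>]) (simp_all add: prod_nonneg)
  then show ?thesis
    unfolding QI_eq has_bochner_integral_integral_eq[OF ln_r] .
qed

lemma le_SUP_dball:
  fixes f :: "'a \<Rightarrow> real"
  assumes d: "is_metric_on X d" and \<theta>: "\<theta> \<in> X" and \<rho>: "0 \<le> \<rho>"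
    and f_bounded: "\<And>\<theta>'. \<theta>' \<in> X \<Longrightarrow> f \<theta>' \<le> B"
  shows "f \<theta> \<le> (SUP \<theta>'\<in>dball X d \<rho> \<theta>. f \<theta>')"
proof (rule cSUP_upper)
  have "d \<theta> \<theta> = 0"
    using d \<theta> unfolding is_metric_on_def by blast
  then show "\<theta> \<in> dball X d \<rho> \<theta>"
    using \<theta> \<rho> by (simp add: dball_def)
next
  show "bdd_above (f ` dball X d \<rho> \<theta>)"
    using f_bounded by (intro bdd_aboveI[where M=B]) (auto simp: dball_def)
qed

lemma integral_le_nn_integral_SUP_dball:
  fixes f :: "'a \<Rightarrow> real"
  assumes d: "is_metric_on (space M) d" and \<rho>: "0 \<le> \<rho>"
    and f_bounded: "\<And>\<theta>. \<theta> \<in> space M \<Longrightarrow> 0 \<le> f \<theta> \<and> f \<theta> \<le> B"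
  shows "ennreal (\<integral>\<theta>. f \<theta> \<partial>M) \<le> (\<integral>\<^sup>+\<theta>. ennreal (SUP \<theta>'\<in>dball (space M) d \<rho> \<theta>. f \<theta>') \<partial>M)"
proof (cases "integrable M f")
  case True
  then have "ennreal (\<integral>\<theta>. f \<theta> \<partial>M) = (\<integral>\<^sup>+\<theta>. f \<theta> \<partial>M)"
    using f_bounded by (intro nn_integral_eq_integral[symmetric]) auto
  also have "\<dots> \<le> (\<integral>\<^sup>+\<theta>. ennreal (SUP \<theta>'\<in>dball (space M) d \<rho> \<theta>. f \<theta>') \<partial>M)"
    using f_bounded by (intro nn_integral_mono ennreal_leI le_SUP_dball[OF d _ \<rho>]) auto
  finally show ?thesis .
qed (simp add: not_integrable_integral_eq)

theorem corollary1:
  fixes P Q :: "'a measure"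
    and D :: "('x \<times> 'y) measure"
    and K N :: nat
    and \<alpha> L \<rho> \<delta> :: real
    and l :: "'a \<Rightarrow> 'x \<Rightarrow> 'y \<Rightarrow> real"
    and ldiv :: "(nat \<Rightarrow> 'a) \<Rightarrow> 'x \<Rightarrow> 'y \<Rightarrow> real"
    and d :: "(nat \<Rightarrow> 'a) \<Rightarrow> (nat \<Rightarrow> 'a) \<Rightarrow> real"
  assumes P: "prob_space P" and Q: "prob_space Q" and sets_PQ: "sets Q = sets P"
    and D: "prob_space D"
    and K: "K \<ge> 1" and N: "N \<ge> 1"
    and alpha: "\<alpha> > 0"
    and loss_meas: "(\<lambda>(\<theta>, z). ens_loss K \<alpha> l ldiv \<theta> (fst z) (snd z))
                      \<in> borel_measurable (PiM {..<K} (\<lambda>_. Q) \<Otimes>\<^sub>M D)"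
    and loss_bounded: "\<And>\<theta> z. \<theta> \<in> space (PiM {..<K} (\<lambda>_. Q)) \<Longrightarrow> z \<in> space D \<Longrightarrow>
                      0 \<le> ens_loss K \<alpha> l ldiv \<theta> (fst z) (snd z) \<and>
                      ens_loss K \<alpha> l ldiv \<theta> (fst z) (snd z) \<le> L"
    and metric: "is_metric_on (space (PiM {..<K} (\<lambda>_. Q))) d"
    and rho: "\<rho> > 0"
    and KL_finite: "absolutely_continuous P Q" "integrable Q (entropy_density (exp 1) P Q)"
    and delta: "0 < \<delta>" "\<delta> < 1"
  shows "\<exists>E \<in> sets (PiM {..<N} (\<lambda>_. D)).
           measure (PiM {..<N} (\<lambda>_. D)) E \<ge> 1 - \<delta> \<and>
           (\<forall>S \<in> E.
              ennreal (\<integral>\<theta>. pop_risk D (ens_loss K \<alpha> l ldiv) \<theta> \<partial>(PiM {..<K} (\<lambda>_. Q)))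
              \<le> (\<integral>\<^sup>+\<theta>. ennreal (SUP \<theta>' \<in> dball (space (PiM {..<K} (\<lambda>_. Q))) d \<rho> \<theta>.
                                      emp_risk N S (ens_loss K \<alpha> l ldiv) \<theta>')
                     \<partial>(PiM {..<K} (\<lambda>_. Q)))
                 + ennreal (L * sqrt ((real K * KL_divergence (exp 1) P Q + ln (1 / \<delta>))
                                     / (2 * real N))))"
proof -
  let ?QK = "PiM {..<K} (\<lambda>_. Q)" and ?DN = "PiM {..<N} (\<lambda>_. D)" and ?lf = "ens_loss K \<alpha> l ldiv"
  let ?gap = "L * sqrt ((real K * KL_divergence (exp 1) P Q + ln (1 / \<delta>)) / (2 * real N))"
  obtain E where E: "E \<in> sets ?DN" "1 - \<delta> \<le> measure ?DN E"
    and bound: "\<And>S. S \<in> E \<Longrightarrow> (\<integral>\<theta>. pop_risk D ?lf \<theta> \<partial>?QK) \<le> (\<integral>\<theta>. emp_risk N S ?lf \<theta> \<partial>?QK) + ?gap"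
    using pac_bayes_PiM[OF P Q sets_PQ KL_finite finite_lessThan D N delta loss_meas loss_bounded]
    by (auto simp: pop_risk_def emp_risk_def)
  have emp_bounded: "0 \<le> emp_risk N S ?lf \<theta> \<and> emp_risk N S ?lf \<theta> \<le> L" if "S \<in> E" "\<theta> \<in> space ?QK" for S \<theta>
    unfolding emp_risk_def using sets.sets_into_space[OF E(1)] that loss_bounded
    by (intro empirical_mean_bounded[OF _ N]) auto
  have "ennreal (\<integral>\<theta>. pop_risk D ?lf \<theta> \<partial>?QK)
      \<le> (\<integral>\<^sup>+\<theta>. ennreal (SUP \<theta>'\<in>dball (space ?QK) d \<rho> \<theta>. emp_risk N S ?lf \<theta>') \<partial>?QK) + ennreal ?gap"
    if S: "S \<in> E" for S
  proof -
    have "ennreal (\<integral>\<theta>. pop_risk D ?lf \<theta> \<partial>?QK) \<le> ennreal ((\<integral>\<theta>. emp_risk N S ?lf \<theta> \<partial>?QK) + ?gap)"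
      using bound[OF S] by (rule ennreal_leI)
    also have "\<dots> \<le> ennreal (\<integral>\<theta>. emp_risk N S ?lf \<theta> \<partial>?QK) + ennreal ?gap"
      by (rule ennreal_add_le)
    also have "\<dots> \<le> (\<integral>\<^sup>+\<theta>. ennreal (SUP \<theta>'\<in>dball (space ?QK) d \<rho> \<theta>. emp_risk N S ?lf \<theta>') \<partial>?QK) + ennreal ?gap"
      using rho emp_bounded[OF S] by (intro add_right_mono integral_le_nn_integral_SUP_dball[OF metric]) auto
    finally show ?thesis .
  qed
  with E show ?thesis
    by blast
qed

end
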